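(* Under the hypotheses of the average consensus error bound (SGP with Assumptions (1)–(4), the almost-sure bound $\|\bar{x}^{(t)}-z_i^{(t)}\|\le Cq^tX_0+\eta C\sum_{s=0}^tq^{t-s}\max_j\|g_j(z_j^{(s)};\xi_j^{(s)})\|$ for all $t\ge0$ and $i$ with $X_0=\max_m\|x_m^{(0)}\|$, and $P:=1-\frac{9\eta^2C^2L^2n}{(1-q)^2}>0$), assume moreover $0<\eta\le1/L$ and that for a given $T\ge1$ the cumulative inequality $$\frac{\eta}{2}\sum_{t=0}^{T-1}\mathbb{E}\|\nabla f(\bar{x}^{(t)})\|^2+\frac{\eta-L\eta^2}{2}\sum_{t=0}^{T-1}\mathbb{E}\Big\|\frac1n\sum_{i=1}^n\nabla f_i(z_i^{(t)})\Big\|^2\le f(\bar{x}^{(0)})-f^*+\frac{L\eta^2\sigma^2}{2n}T+\frac{\eta L^2}{2}\sum_{t=0}^{T-1}M^{(t)}$$ holds, where $M^{(t)}=\frac1n\sum_i\mathbb{E}\|\bar{x}^{(t)}-z_i^{(t)}\|^2$. Then $$\Big(1-\frac{9\eta^2L^2C^2}{P(1-q)^2}\Big)\sum_{t=0}^{T-1}\mathbb{E}\|\nabla f(\bar{x}^{(t)})\|^2\le\frac{2(f(\bar{x}^{(0)})-f^* )}{\eta}+\frac{L\eta\sigma^2T}{n}+\frac{3L^2C^2X_0^2}{P(1-q)^2}+\frac{3\eta^2L^2C^2n\sigma^2T}{P(1-q)^2}+\frac{9\eta^2L^2C^2n\zeta^2T}{P(1-q)^2}.$$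
   Context: Setting (SGP). Nodes $V=\{1,\dots,n\}$, $n\ge2$, base topology $G=(V,E)$ bidirected with self-loops; local objectives $f_i$, $f=\frac1n\sum_i f_i$, $f^*$ the finite optimal value of $f$; stochastic gradients $g_i(x;\xi)$ with fresh independent minibatches. SGP with nonnegative column-stochastic mixing matrices $W^{(t)}$ ($W^{(t)}_{ij}\ne0$ only if $(j,i)\in E$): $x_i^{(t+1)}=\sum_j W^{(t)}_{ij}(x_j^{(t)}-\eta g_j(z_j^{(t)};\xi_j^{(t)}))$, $w_i^{(t+1)}=\sum_jW^{(t)}_{ij}w_j^{(t)}$, $w_i^{(0)}=1$, $z_i^{(t)}=x_i^{(t)}/w_i^{(t)}$, $\bar{x}^{(t)}=\frac1n\sum_ix_i^{(t)}$. $E^{(t)}=\{(j,i)\in E:W^{(t)}_{ij}\ne0\}$, $\delta=\min_t\min_{W^{(t)}_{ij}>0}W^{(t)}_{ij}$. Assumptions: (1) each $f_i$ is $L$-smooth; (2) $\mathbb{E}\|g_i(x;\xi)-\nabla f_i(x)\|^2\le\sigma^2$ for all $i,x$; (3) $\frac1n\sum_i\|\nabla f_i(x)-\nabla f(x)\|^2\le\zeta^2$ for all $x$; (4) positive integers $B,\Delta$ exist with $(V,\bigcup_{t=lB}^{(l+1)B-1}E^{(t)})$ strongly connected of diameter at most $\Delta$ for every $l\in\mathbb{N}$. Constants: $C=4/\delta^{\Delta B}$ and $q=(1-\delta^{\Delta B})^{1/(\Delta B)}\in(0,1)$. *)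

theory Defs
  imports "HOL-Probability.Probability"
begin

text \<open>Average over the nodes 0..n-1 (nodes are indexed by 0..n-1 instead of 1..n).\<close>
definition avg :: "nat \<Rightarrow> (nat \<Rightarrow> 'a::real_vector) \<Rightarrow> 'a" where
  "avg n v = (1 / real n) *\<^sub>R (\<Sum>i<n. v i)"

definition strongly_connected_diam_le :: "nat \<Rightarrow> (nat \<times> nat) set \<Rightarrow> nat \<Rightarrow> bool" where
  "strongly_connected_diam_le n Es Delta \<longleftrightarrow>
     (\<forall>i<n. \<forall>j<n. \<exists>k\<le>Delta. (i, j) \<in> Es ^^ k)"

definition active_edges :: "(nat \<times> nat) set \<Rightarrow> (nat \<Rightarrow> nat \<Rightarrow> nat \<Rightarrow> real) \<Rightarrow> nat \<Rightarrow> (nat \<times> nat) set" where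
  "active_edges Eg W t = {(j, i). (j, i) \<in> Eg \<and> W t i j \<noteq> 0}"

end

theory Submission
  imports Defs
begin

(* Squaring the almost-sure consensus bound with Young's inequality and a weighted Cauchy-Schwarz
   inequality, and summing the geometric convolution over t, bounds the total consensus error by
   3 C^2 X0^2 / (1 - q)^2 plus (3/2) eta^2 C^2 / (1 - q)^2 times the sum of the squared largest
   stochastic gradients. Each stochastic gradient splits into its noise, a Lipschitz term controlled
   by the consensus error, the heterogeneity and the gradient of f at the average. As z_j^(s) only
   depends on earlier minibatches, independence bounds the second moment of the noise by sigma^2.
   In expectation this is a linear inequality for the total consensus error, which P > 0 lets us
   solve; substituting the solution into the cumulative descent inequality gives the claim. *)

lemma power2_add_le_weighted:
  fixes a b e :: real
  assumes "0 < e"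
  shows "(a + b)\<^sup>2 \<le> (1 + e) * a\<^sup>2 + (1 + 1 / e) * b\<^sup>2"
proof -
  have "(1 + e) * a\<^sup>2 + (1 + 1 / e) * b\<^sup>2 - (a + b)\<^sup>2 = (e * a - b)\<^sup>2 / e"
    using assms by (simp add: field_simps power2_eq_square)
  moreover have "0 \<le> (e * a - b)\<^sup>2 / e"
    using assms by simp
  ultimately show ?thesis by linarith
qed

lemma power2_sum4_le:
  fixes a b c d :: real
  shows "(a + b + c + d)\<^sup>2 \<le> 2 * a\<^sup>2 + 6 * b\<^sup>2 + 6 * c\<^sup>2 + 6 * d\<^sup>2"
proof -
  have "2 * a\<^sup>2 + 6 * b\<^sup>2 + 6 * c\<^sup>2 + 6 * d\<^sup>2 - (a + b + c + d)\<^sup>2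
      = (a - b - c - d)\<^sup>2 + 2 * ((b - c)\<^sup>2 + (b - d)\<^sup>2 + (c - d)\<^sup>2)"
    by (simp add: power2_eq_square algebra_simps)
  moreover have "0 \<le> (a - b - c - d)\<^sup>2 + 2 * ((b - c)\<^sup>2 + (b - d)\<^sup>2 + (c - d)\<^sup>2)"
    by simp
  ultimately show ?thesis by linarith
qed

lemma power2_weighted_sum_le:
  fixes u G :: "nat \<Rightarrow> real"
  assumes "\<And>s. s \<in> A \<Longrightarrow> 0 \<le> u s"
  shows "(\<Sum>s\<in>A. u s * G s)\<^sup>2 \<le> (\<Sum>s\<in>A. u s) * (\<Sum>s\<in>A. u s * (G s)\<^sup>2)"
proof -
  have "(\<Sum>s\<in>A. u s * G s) = (\<Sum>s\<in>A. sqrt (u s) * (sqrt (u s) * G s))"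
    by (rule sum.cong) (use assms in \<open>auto simp: real_sqrt_mult[symmetric]\<close>)
  also have "(\<dots>)\<^sup>2 \<le> (\<Sum>s\<in>A. (sqrt (u s))\<^sup>2) * (\<Sum>s\<in>A. (sqrt (u s) * G s)\<^sup>2)"
    by (rule Cauchy_Schwarz_ineq_sum)
  also have "\<dots> = (\<Sum>s\<in>A. u s) * (\<Sum>s\<in>A. u s * (G s)\<^sup>2)"
    using assms by (simp add: power_mult_distrib)
  finally show ?thesis .
qed

lemma sum_geometric_le:
  fixes q :: real
  assumes "0 \<le> q" "q < 1"
  shows "(\<Sum>k<m. q ^ k) \<le> 1 / (1 - q)"
  using assms by (simp add: sum_gp_strict divide_right_mono)

lemma power2_geometric_convolution_le:
  fixes q :: real and G :: "nat \<Rightarrow> real"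
  assumes "0 \<le> q" "q < 1"
  shows "(\<Sum>s\<le>t. q ^ (t - s) * G s)\<^sup>2 \<le> 1 / (1 - q) * (\<Sum>s\<le>t. q ^ (t - s) * (G s)\<^sup>2)"
proof -
  have "(\<Sum>s\<le>t. q ^ (t - s)) = (\<Sum>k<Suc t. q ^ k)"
    by (rule sum.reindex_bij_witness[where i="\<lambda>k. t - k" and j="\<lambda>s. t - s"]) auto
  also have "\<dots> \<le> 1 / (1 - q)"
    by (rule sum_geometric_le[OF assms])
  finally have "(\<Sum>s\<le>t. q ^ (t - s)) \<le> 1 / (1 - q)" .
  moreover have "0 \<le> (\<Sum>s\<le>t. q ^ (t - s) * (G s)\<^sup>2)"
    using assms by (intro sum_nonneg) auto
  ultimately show ?thesis
    using power2_weighted_sum_le[of "{..t}" "\<lambda>s. q ^ (t - s)" G] assms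
    by (meson mult_right_mono order_trans zero_le_power)
qed

lemma sum_geometric_convolution_le:
  fixes q :: real and H :: "nat \<Rightarrow> real"
  assumes "0 \<le> q" "q < 1" "\<And>s. 0 \<le> H s"
  shows "(\<Sum>t<T. \<Sum>s\<le>t. q ^ (t - s) * H s) \<le> 1 / (1 - q) * (\<Sum>s<T. H s)"
proof -
  have "(\<Sum>t<T. \<Sum>s\<le>t. q ^ (t - s) * H s)
      = (\<Sum>t<T. \<Sum>s\<in>{s. s \<in> {..<T} \<and> s \<le> t}. q ^ (t - s) * H s)"
    by (intro sum.cong) auto
  also have "\<dots> = (\<Sum>s<T. (\<Sum>t\<in>{t. t \<in> {..<T} \<and> s \<le> t}. q ^ (t - s)) * H s)"
    unfolding sum_distrib_right by (rule sum.swap_restrict) auto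
  also have "\<dots> \<le> (\<Sum>s<T. 1 / (1 - q) * H s)"
  proof (intro sum_mono mult_right_mono)
    fix s
    have "(\<Sum>t\<in>{t. t \<in> {..<T} \<and> s \<le> t}. q ^ (t - s)) = (\<Sum>k<T - s. q ^ k)"
      by (rule sum.reindex_bij_witness[where i="\<lambda>k. k + s" and j="\<lambda>t. t - s"]) auto
    then show "(\<Sum>t\<in>{t. t \<in> {..<T} \<and> s \<le> t}. q ^ (t - s)) \<le> 1 / (1 - q)"
      using sum_geometric_le[OF assms(1,2)] by simp
  qed (use assms in auto)
  finally show ?thesis by (simp add: sum_distrib_left)
qed

lemma power2_geometric_bound_le:
  fixes e :: real and G :: "nat \<Rightarrow> real"
  assumes q: "0 \<le> q" "q < 1"
    and e_nonneg: "0 \<le> e" and e_le: "e \<le> C * q ^ t * X0 + eta * C * (\<Sum>s\<le>t. q ^ (t - s) * G s)"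
  shows "e\<^sup>2 \<le> 3 * C\<^sup>2 * X0\<^sup>2 * q ^ t + 3 / 2 * eta\<^sup>2 * C\<^sup>2 / (1 - q) * (\<Sum>s\<le>t. q ^ (t - s) * (G s)\<^sup>2)"
proof -
  define k where "k = 3 / 2 * eta\<^sup>2 * C\<^sup>2 / (1 - q)"
  have "e\<^sup>2 \<le> (C * q ^ t * X0 + eta * C * (\<Sum>s\<le>t. q ^ (t - s) * G s))\<^sup>2"
    by (rule power_mono[OF e_le e_nonneg])
  also have "\<dots> \<le> (1 + 2) * (C * q ^ t * X0)\<^sup>2 + (1 + 1 / 2) * (eta * C * (\<Sum>s\<le>t. q ^ (t - s) * G s))\<^sup>2"
    by (rule power2_add_le_weighted) simp
  finally have "e\<^sup>2 \<le> 3 * (C * q ^ t * X0)\<^sup>2 + 3 / 2 * (eta * C * (\<Sum>s\<le>t. q ^ (t - s) * G s))\<^sup>2"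
    by simp
  moreover have "(C * q ^ t * X0)\<^sup>2 \<le> C\<^sup>2 * X0\<^sup>2 * q ^ t"
  proof -
    have "(q ^ t)\<^sup>2 \<le> q ^ t"
      using q by (simp add: power2_eq_square mult_left_le_one_le power_le_one)
    then have "C\<^sup>2 * X0\<^sup>2 * (q ^ t)\<^sup>2 \<le> C\<^sup>2 * X0\<^sup>2 * q ^ t"
      by (simp add: mult_left_mono)
    then show ?thesis
      by (simp add: power_mult_distrib algebra_simps)
  qed
  moreover have "(eta * C * (\<Sum>s\<le>t. q ^ (t - s) * G s))\<^sup>2
      \<le> (eta * C)\<^sup>2 * (1 / (1 - q) * (\<Sum>s\<le>t. q ^ (t - s) * (G s)\<^sup>2))"
    unfolding power_mult_distrib[of "eta * C"]
    by (intro mult_left_mono power2_geometric_convolution_le q) simp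
  moreover have "k * (\<Sum>s\<le>t. q ^ (t - s) * (G s)\<^sup>2)
      = 3 / 2 * ((eta * C)\<^sup>2 * (1 / (1 - q) * (\<Sum>s\<le>t. q ^ (t - s) * (G s)\<^sup>2)))"
    by (simp add: k_def power_mult_distrib)
  ultimately show ?thesis
    unfolding k_def[symmetric] by linarith
qed

lemma sum_power2_geometric_bound_le:
  fixes e G :: "nat \<Rightarrow> real"
  assumes q: "0 \<le> q" "q < 1"
    and e_nonneg: "\<And>t. t < T \<Longrightarrow> 0 \<le> e t"
    and e_le: "\<And>t. t < T \<Longrightarrow> e t \<le> C * q ^ t * X0 + eta * C * (\<Sum>s\<le>t. q ^ (t - s) * G s)"
  shows "(\<Sum>t<T. (e t)\<^sup>2)
    \<le> 3 * C\<^sup>2 * X0\<^sup>2 / (1 - q)\<^sup>2 + 3 / 2 * eta\<^sup>2 * C\<^sup>2 / (1 - q)\<^sup>2 * (\<Sum>s<T. (G s)\<^sup>2)"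
proof -
  define k where "k = 3 / 2 * eta\<^sup>2 * C\<^sup>2 / (1 - q)"
  have k_nonneg: "0 \<le> k"
    using q by (simp add: k_def)
  have "(\<Sum>t<T. (e t)\<^sup>2)
      \<le> (\<Sum>t<T. 3 * C\<^sup>2 * X0\<^sup>2 * q ^ t + k * (\<Sum>s\<le>t. q ^ (t - s) * (G s)\<^sup>2))"
    unfolding k_def by (intro sum_mono power2_geometric_bound_le q e_nonneg e_le) auto
  also have "\<dots> = 3 * C\<^sup>2 * X0\<^sup>2 * (\<Sum>t<T. q ^ t) + k * (\<Sum>t<T. \<Sum>s\<le>t. q ^ (t - s) * (G s)\<^sup>2)"
    by (simp only: sum.distrib sum_distrib_left)
  also have "\<dots> \<le> 3 * C\<^sup>2 * X0\<^sup>2 * (1 / (1 - q)\<^sup>2) + k * (1 / (1 - q) * (\<Sum>s<T. (G s)\<^sup>2))"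
  proof (intro add_mono mult_left_mono sum_geometric_convolution_le k_nonneg q)
    have "1 / (1 - q) \<le> 1 / (1 - q)\<^sup>2"
      using q by (simp add: divide_simps power2_eq_square)
    then show "(\<Sum>t<T. q ^ t) \<le> 1 / (1 - q)\<^sup>2"
      using sum_geometric_le[OF q, of T] by linarith
  qed simp_all
  also have "\<dots> = 3 * C\<^sup>2 * X0\<^sup>2 / (1 - q)\<^sup>2 + 3 / 2 * eta\<^sup>2 * C\<^sup>2 / (1 - q)\<^sup>2 * (\<Sum>s<T. (G s)\<^sup>2)"
    using q by (simp add: k_def power2_eq_square)
  finally show ?thesis .
qed

section \<open>Square-integrable random vectors\<close>

definition square_integrable :: "'w measure \<Rightarrow> ('w \<Rightarrow> 'a::euclidean_space) \<Rightarrow> bool" where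
  "square_integrable M f \<longleftrightarrow> f \<in> borel_measurable M \<and> integrable M (\<lambda>\<omega>. (norm (f \<omega>))\<^sup>2)"

lemma square_integrable_dominated:
  assumes f1: "square_integrable M f1" and f2: "square_integrable M f2"
    and f: "f \<in> borel_measurable M"
    and le: "\<And>\<omega>. norm (f \<omega>) \<le> norm (f1 \<omega>) + norm (f2 \<omega>)"
  shows "square_integrable M f"
proof -
  have bound: "integrable M (\<lambda>\<omega>. 2 * (norm (f1 \<omega>))\<^sup>2 + 2 * (norm (f2 \<omega>))\<^sup>2)"
    using f1 f2 by (auto simp: square_integrable_def)
  have le_bound: "(norm (f \<omega>))\<^sup>2 \<le> 2 * (norm (f1 \<omega>))\<^sup>2 + 2 * (norm (f2 \<omega>))\<^sup>2" for \<omega>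
  proof -
    have "(norm (f \<omega>))\<^sup>2 \<le> (norm (f1 \<omega>) + norm (f2 \<omega>))\<^sup>2"
      by (rule power_mono[OF le]) simp
    also have "\<dots> \<le> (1 + 1) * (norm (f1 \<omega>))\<^sup>2 + (1 + 1 / 1) * (norm (f2 \<omega>))\<^sup>2"
      by (rule power2_add_le_weighted) simp
    finally show ?thesis
      by simp
  qed
  have "integrable M (\<lambda>\<omega>. (norm (f \<omega>))\<^sup>2)"
  proof (rule Bochner_Integration.integrable_bound[OF bound])
    show "(\<lambda>\<omega>. (norm (f \<omega>))\<^sup>2) \<in> borel_measurable M"
      using f by measurable
  qed (use le_bound in \<open>auto intro!: AE_I2\<close>)
  with f show ?thesis
    by (simp add: square_integrable_def)
qed

lemma square_integrable_const: "finite_measure M \<Longrightarrow> square_integrable M (\<lambda>_. c)"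
  by (simp add: square_integrable_def finite_measure.integrable_const)

lemma square_integrable_scaleR:
  assumes "square_integrable M f"
  shows "square_integrable M (\<lambda>\<omega>. c *\<^sub>R f \<omega>)"
  using assms by (auto simp: square_integrable_def power_mult_distrib intro: borel_measurable_scaleR)

lemma square_integrable_add:
  assumes "square_integrable M f" "square_integrable M g"
  shows "square_integrable M (\<lambda>\<omega>. f \<omega> + g \<omega>)"
  by (rule square_integrable_dominated[OF assms]) (use assms in \<open>auto simp: square_integrable_def norm_triangle_ineq\<close>)

lemma square_integrable_diff:
  assumes "square_integrable M f" "square_integrable M g"
  shows "square_integrable M (\<lambda>\<omega>. f \<omega> - g \<omega>)"
  using square_integrable_add[OF assms(1) square_integrable_scaleR[OF assms(2), of "-1"]] by simp

lemma square_integrable_sum: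
  assumes "finite_measure M" "\<And>j. j \<in> A \<Longrightarrow> square_integrable M (f j)"
  shows "square_integrable M (\<lambda>\<omega>. \<Sum>j\<in>A. f j \<omega>)"
  using assms(2)
proof (induction A rule: infinite_finite_induct)
  case (insert a A)
  then show ?case
    by (simp add: square_integrable_add)
qed (use square_integrable_const[OF assms(1), of 0] in auto)

lemma square_integrable_lipschitz_comp:
  fixes \<phi> :: "'a::euclidean_space \<Rightarrow> 'b::euclidean_space"
  assumes f: "square_integrable M f" and M: "finite_measure M"
    and \<phi>: "L-lipschitz_on UNIV \<phi>"
  shows "square_integrable M (\<lambda>\<omega>. \<phi> (f \<omega>))"
proof (rule square_integrable_dominated)
  show "square_integrable M (\<lambda>_. \<phi> 0)"
    by (rule square_integrable_const[OF M])
  show "square_integrable M (\<lambda>\<omega>. L *\<^sub>R f \<omega>)"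
    by (rule square_integrable_scaleR[OF f])
  have "\<phi> \<in> borel_measurable borel"
    using \<phi> by (intro borel_measurable_continuous_onI lipschitz_on_continuous_on)
  then show "(\<lambda>\<omega>. \<phi> (f \<omega>)) \<in> borel_measurable M"
    using f by (auto simp: square_integrable_def intro: measurable_compose)
  fix \<omega>
  have "norm (\<phi> (f \<omega>) - \<phi> 0) \<le> L * norm (f \<omega>)"
    using lipschitz_onD[OF \<phi>, of "f \<omega>" 0] by (simp add: dist_norm)
  moreover have "0 \<le> L"
    using \<phi> lipschitz_on_nonneg by blast
  ultimately show "norm (\<phi> (f \<omega>)) \<le> norm (\<phi> 0) + norm (L *\<^sub>R f \<omega>)"
    by (smt (verit) norm_scaleR norm_triangle_sub)
qed

lemma square_integrable_nn_integral_le: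
  assumes f: "f \<in> borel_measurable M" and b: "(\<integral>\<^sup>+\<omega>. ennreal ((norm (f \<omega>))\<^sup>2) \<partial>M) \<le> ennreal b"
    and b_nonneg: "0 \<le> b"
  shows "square_integrable M f" and "(\<integral>\<omega>. (norm (f \<omega>))\<^sup>2 \<partial>M) \<le> b"
proof -
  have integrable: "integrable M (\<lambda>\<omega>. (norm (f \<omega>))\<^sup>2)"
    using f b by (intro integrableI_bounded) (auto simp: le_less_trans)
  then show "square_integrable M f"
    using f by (simp add: square_integrable_def)
  have "ennreal (\<integral>\<omega>. (norm (f \<omega>))\<^sup>2 \<partial>M) \<le> ennreal b"
    using b by (simp add: nn_integral_eq_integral[OF integrable])
  then show "(\<integral>\<omega>. (norm (f \<omega>))\<^sup>2 \<partial>M) \<le> b"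
    using b_nonneg by (simp add: ennreal_le_iff)
qed

section \<open>The SGP process\<close>

lemma (in prob_space) indep_var_restrict_fresh:
  assumes indep: "indep_vars N X I" and K: "K \<subseteq> I" and k: "k \<in> I" "k \<notin> K"
  shows "indep_var (PiM K N) (\<lambda>\<omega>. restrict (\<lambda>i. X i \<omega>) K) (PiM {k} N) (\<lambda>\<omega>. restrict (\<lambda>i. X i \<omega>) {k})"
proof -
  have "indep_vars (\<lambda>b. PiM (case_bool K {k} b) N)
      (\<lambda>b \<omega>. restrict (\<lambda>i. X i \<omega>) (case_bool K {k} b)) UNIV"
    by (rule indep_vars_restrict[OF indep]) (use K k in \<open>auto simp: disjoint_family_on_def split: bool.split\<close>)
  moreover have "(\<lambda>b. PiM (case_bool K {k} b) N) = case_bool (PiM K N) (PiM {k} N)"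
    by (auto split: bool.split)
  moreover have "(\<lambda>b \<omega>. restrict (\<lambda>i. X i \<omega>) (case_bool K {k} b))
      = case_bool (\<lambda>\<omega>. restrict (\<lambda>i. X i \<omega>) K) (\<lambda>\<omega>. restrict (\<lambda>i. X i \<omega>) {k})"
    by (auto split: bool.split)
  ultimately show ?thesis
    unfolding indep_var_def by simp
qed

lemma (in prob_space) nn_integral_indep_fresh_le:
  assumes indep: "indep_vars N X I" and K: "K \<subseteq> I" and k: "k \<in> I" "k \<notin> K"
    and X_distr: "distr M (N k) (X k) = N k"
    and \<Phi>: "\<Phi> \<in> measurable (PiM K N) Ma"
    and h: "h \<in> borel_measurable (Ma \<Otimes>\<^sub>M N k)"
    and bound: "\<And>y. y \<in> space Ma \<Longrightarrow> (\<integral>\<^sup>+ c. h (y, c) \<partial>N k) \<le> b"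
  shows "(\<integral>\<^sup>+ \<omega>. h (\<Phi> (restrict (\<lambda>i. X i \<omega>) K), X k \<omega>) \<partial>M) \<le> b"
proof -
  define Y where "Y = (\<lambda>\<omega>. restrict (\<lambda>i. X i \<omega>) K)"
  define Y' where "Y' = (\<lambda>\<omega>. restrict (\<lambda>i. X i \<omega>) {k})"
  have indep_past_fresh: "indep_var (PiM K N) Y (PiM {k} N) Y'"
    unfolding Y_def Y'_def by (rule indep_var_restrict_fresh[OF indep K k])
  then have Y: "Y \<in> measurable M (PiM K N)" and Y': "Y' \<in> measurable M (PiM {k} N)"
    by (simp_all add: indep_var_rv1 indep_var_rv2)
  have X_k: "X k \<in> measurable M (N k)"
    using indep k by (auto simp: indep_vars_def)
  have Y'_k: "Y' \<omega> k = X k \<omega>" for \<omega>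
    by (simp add: Y'_def)
  have eval_k: "(\<lambda>f. f k) \<in> measurable (PiM {k} N) (N k)"
    by (rule measurable_component_singleton) simp
  interpret past: prob_space "distr M (PiM K N) Y"
    using Y by (rule prob_space_distr)
  interpret fresh: prob_space "distr M (PiM {k} N) Y'"
    using Y' by (rule prob_space_distr)
  have h': "(\<lambda>p. h (\<Phi> (fst p), snd p k)) \<in> borel_measurable (PiM K N \<Otimes>\<^sub>M PiM {k} N)"
    using \<Phi> h eval_k by measurable
  have "(\<integral>\<^sup>+ \<omega>. h (\<Phi> (Y \<omega>), X k \<omega>) \<partial>M)
      = (\<integral>\<^sup>+ p. h (\<Phi> (fst p), snd p k) \<partial>distr M (PiM K N \<Otimes>\<^sub>M PiM {k} N) (\<lambda>\<omega>. (Y \<omega>, Y' \<omega>)))"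
    by (subst nn_integral_distr) (use Y Y' h' in \<open>auto simp: Y'_k\<close>)
  also have "\<dots> = (\<integral>\<^sup>+ p. h (\<Phi> (fst p), snd p k) \<partial>(distr M (PiM K N) Y \<Otimes>\<^sub>M distr M (PiM {k} N) Y'))"
    using indep_past_fresh by (simp add: indep_var_distribution_eq)
  also have "\<dots> = (\<integral>\<^sup>+ y. \<integral>\<^sup>+ f. h (\<Phi> y, f k) \<partial>distr M (PiM {k} N) Y' \<partial>distr M (PiM K N) Y)"
    by (subst fresh.nn_integral_fst[symmetric]) (use h' in \<open>auto cong: measurable_cong_sets\<close>)
  also have "\<dots> = (\<integral>\<^sup>+ y. \<integral>\<^sup>+ c. h (\<Phi> y, c) \<partial>N k \<partial>distr M (PiM K N) Y)"
  proof (rule nn_integral_cong)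
    fix y assume "y \<in> space (distr M (PiM K N) Y)"
    then have "\<Phi> y \<in> space Ma"
      using \<Phi> by (auto simp: measurable_space)
    then have h_y: "(\<lambda>c. h (\<Phi> y, c)) \<in> borel_measurable (N k)"
      using h by measurable
    have "(\<integral>\<^sup>+ f. h (\<Phi> y, f k) \<partial>distr M (PiM {k} N) Y') = (\<integral>\<^sup>+ \<omega>. h (\<Phi> y, X k \<omega>) \<partial>M)"
      by (subst nn_integral_distr) (use Y' h_y eval_k in \<open>auto simp: Y'_k\<close>)
    also have "\<dots> = (\<integral>\<^sup>+ c. h (\<Phi> y, c) \<partial>distr M (N k) (X k))"
      by (subst nn_integral_distr) (use X_k h_y in auto)
    finally show "(\<integral>\<^sup>+ f. h (\<Phi> y, f k) \<partial>distr M (PiM {k} N) Y') = (\<integral>\<^sup>+ c. h (\<Phi> y, c) \<partial>N k)"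
      by (simp add: X_distr)
  qed
  also have "\<dots> \<le> (\<integral>\<^sup>+ y. b \<partial>distr M (PiM K N) Y)"
    by (intro nn_integral_mono bound) (use \<Phi> in \<open>auto simp: measurable_space\<close>)
  also have "\<dots> = b"
    using past.emeasure_space_1 by simp
  finally show ?thesis
    by (simp add: Y_def)
qed

(* sgp_iterate n W w eta g x0 t i c is the iterate x_i^(t) computed along the sample path c,
   where c (s, j) plays the role of the minibatch xi_j^(s). *)
fun sgp_iterate :: "nat \<Rightarrow> (nat \<Rightarrow> nat \<Rightarrow> nat \<Rightarrow> real) \<Rightarrow> (nat \<Rightarrow> nat \<Rightarrow> real) \<Rightarrow> real
    \<Rightarrow> (nat \<Rightarrow> 'a::real_vector \<Rightarrow> 'c \<Rightarrow> 'a) \<Rightarrow> (nat \<Rightarrow> 'a) \<Rightarrow> nat \<Rightarrow> nat \<Rightarrow> (nat \<times> nat \<Rightarrow> 'c) \<Rightarrow> 'a"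
where
  "sgp_iterate n W w eta g x0 0 i c = x0 i"
| "sgp_iterate n W w eta g x0 (Suc t) i c =
    (\<Sum>j<n. W t i j *\<^sub>R (sgp_iterate n W w eta g x0 t j c
       - eta *\<^sub>R g j (inverse (w t j) *\<^sub>R sgp_iterate n W w eta g x0 t j c) (c (t, j))))"

lemma sgp_iterate_cong_past:
  assumes "\<And>p. p \<in> {..<t} \<times> {..<n} \<Longrightarrow> c p = c' p"
  shows "sgp_iterate n W w eta g x0 t i c = sgp_iterate n W w eta g x0 t i c'"
  using assms
proof (induction t arbitrary: i)
  case (Suc t)
  then have "sgp_iterate n W w eta g x0 t j c = sgp_iterate n W w eta g x0 t j c'" for j
    by force
  moreover have "c (t, j) = c' (t, j)" if "j < n" for j
    using Suc.prems that by simp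
  ultimately show ?case
    by simp
qed simp

lemma sgp_iterate_measurable:
  fixes g :: "nat \<Rightarrow> 'a::euclidean_space \<Rightarrow> 'c \<Rightarrow> 'a"
  assumes g: "\<forall>i<n. (\<lambda>p. g i (fst p) (snd p)) \<in> borel_measurable (borel \<Otimes>\<^sub>M D i)"
    and K: "{..<t} \<times> {..<n} \<subseteq> K"
  shows "sgp_iterate n W w eta g x0 t i \<in> borel_measurable (PiM K (\<lambda>p. D (snd p)))"
  using K
proof (induction t arbitrary: i)
  case (Suc t)
  then have IH: "sgp_iterate n W w eta g x0 t j \<in> borel_measurable (PiM K (\<lambda>p. D (snd p)))" for j
    by force
  have "(\<lambda>c. g j (inverse (w t j) *\<^sub>R sgp_iterate n W w eta g x0 t j c) (c (t, j)))
      \<in> borel_measurable (PiM K (\<lambda>p. D (snd p)))" if j: "j < n" for j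
  proof -
    have "(\<lambda>c. c (t, j)) \<in> measurable (PiM K (\<lambda>p. D (snd p))) (D j)"
      using measurable_component_singleton[of "(t, j)" K "\<lambda>p. D (snd p)"] Suc.prems j by auto
    then have pair: "(\<lambda>c. (inverse (w t j) *\<^sub>R sgp_iterate n W w eta g x0 t j c, c (t, j)))
        \<in> measurable (PiM K (\<lambda>p. D (snd p))) (borel \<Otimes>\<^sub>M D j)"
      using IH by measurable
    show ?thesis
      using measurable_compose[OF pair, of "\<lambda>p. g j (fst p) (snd p)"] g j by simp
  qed
  then show ?case
    using IH by (simp del: sgp_iterate.simps add: sgp_iterate.simps(2)) measurable
next
  case 0
  have "sgp_iterate n W w eta g x0 0 i = (\<lambda>_. x0 i)"
    by (simp add: fun_eq_iff)
  then show ?case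
    by simp
qed

lemma Max_norm_power2_le:
  fixes v zs :: "nat \<Rightarrow> 'a::real_normed_vector" and gradF :: "nat \<Rightarrow> 'a \<Rightarrow> 'a"
  assumes n: "0 < n" and lip: "\<And>i. i < n \<Longrightarrow> L-lipschitz_on UNIV (gradF i)"
    and heterog: "avg n (\<lambda>i. (norm (gradF i y - avg n (\<lambda>j. gradF j y)))\<^sup>2) \<le> zeta\<^sup>2"
  shows "(MAX j\<in>{..<n}. norm (v j))\<^sup>2
    \<le> 2 * (\<Sum>j<n. (norm (v j - gradF j (zs j)))\<^sup>2) + 6 * L\<^sup>2 * (\<Sum>j<n. (norm (y - zs j))\<^sup>2)
      + 6 * real n * zeta\<^sup>2 + 6 * (norm (avg n (\<lambda>i. gradF i y)))\<^sup>2"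
proof -
  define gbar where "gbar = avg n (\<lambda>i. gradF i y)"
  have "(MAX j\<in>{..<n}. norm (v j)) \<in> (\<lambda>j. norm (v j)) ` {..<n}"
    using n by (intro Max_in) auto
  then obtain k where k: "k < n" and Max_eq: "(MAX j\<in>{..<n}. norm (v j)) = norm (v k)"
    by auto
  define a b c d where "a = norm (v k - gradF k (zs k))" and "b = L * norm (y - zs k)"
    and "c = norm (gradF k y - gbar)" and "d = norm gbar"
  have "norm (gradF k (zs k) - gradF k y) \<le> b"
    using lipschitz_onD[OF lip[OF k], of "zs k" y] by (simp add: b_def dist_norm norm_minus_commute)
  moreover have "v k = (v k - gradF k (zs k)) + (gradF k (zs k) - gradF k y) + (gradF k y - gbar) + gbar"
    by simp
  ultimately have "norm (v k) \<le> a + b + c + d"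
    unfolding a_def c_def d_def by (metis add_mono norm_triangle_le order_refl)
  then have "(norm (v k))\<^sup>2 \<le> 2 * a\<^sup>2 + 6 * b\<^sup>2 + 6 * c\<^sup>2 + 6 * d\<^sup>2"
    using power_mono[of "norm (v k)" "a + b + c + d" 2] power2_sum4_le[of a b c d] by simp
  moreover have "a\<^sup>2 \<le> (\<Sum>j<n. (norm (v j - gradF j (zs j)))\<^sup>2)"
    unfolding a_def by (rule member_le_sum) (use k in auto)
  moreover have "b\<^sup>2 \<le> L\<^sup>2 * (\<Sum>j<n. (norm (y - zs j))\<^sup>2)"
    unfolding b_def power_mult_distrib by (intro mult_left_mono member_le_sum) (use k in auto)
  moreover have "c\<^sup>2 \<le> real n * zeta\<^sup>2"
  proof -
    have "c\<^sup>2 \<le> (\<Sum>j<n. (norm (gradF j y - gbar))\<^sup>2)"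
      unfolding c_def by (rule member_le_sum) (use k in auto)
    also have "\<dots> = real n * avg n (\<lambda>j. (norm (gradF j y - gbar))\<^sup>2)"
      using n by (simp add: avg_def)
    also have "\<dots> \<le> real n * zeta\<^sup>2"
      using heterog by (intro mult_left_mono) (simp_all add: gbar_def)
    finally show ?thesis .
  qed
  ultimately show ?thesis
    unfolding Max_eq d_def gbar_def by linarith
qed

locale sgp_process = prob_space M
  for M :: "'w measure" +
  fixes n :: nat
    and W :: "nat \<Rightarrow> nat \<Rightarrow> nat \<Rightarrow> real"
    and w :: "nat \<Rightarrow> nat \<Rightarrow> real"
    and eta L sigma :: real
    and gradF :: "nat \<Rightarrow> 'a::euclidean_space \<Rightarrow> 'a"
    and g :: "nat \<Rightarrow> 'a \<Rightarrow> 'c \<Rightarrow> 'a"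
    and D :: "nat \<Rightarrow> 'c measure"
    and xi :: "nat \<Rightarrow> nat \<Rightarrow> 'w \<Rightarrow> 'c"
    and x z :: "nat \<Rightarrow> nat \<Rightarrow> 'w \<Rightarrow> 'a"
    and x0 :: "nat \<Rightarrow> 'a"
  assumes gradF_lipschitz: "\<And>i. i < n \<Longrightarrow> L-lipschitz_on UNIV (gradF i)"
    and g_meas: "\<forall>i<n. (\<lambda>p. g i (fst p) (snd p)) \<in> borel_measurable (borel \<Otimes>\<^sub>M D i)"
    and noise: "\<forall>i<n. \<forall>y. (\<integral>\<^sup>+ s. ennreal ((norm (g i y s - gradF i y))\<^sup>2) \<partial>D i)
                         \<le> ennreal (sigma\<^sup>2)"
    and xi_meas: "\<forall>t. \<forall>i<n. xi t i \<in> measurable M (D i)"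
    and xi_distr: "\<forall>t. \<forall>i<n. distr M (D i) (xi t i) = D i"
    and xi_indep: "indep_vars (\<lambda>p. D (snd p)) (\<lambda>p. xi (fst p) (snd p)) (UNIV \<times> {..<n})"
    and x_init: "\<forall>i<n. \<forall>\<omega>. x 0 i \<omega> = x0 i"
    and x_step: "\<forall>t. \<forall>i<n. \<forall>\<omega>. x (Suc t) i \<omega> =
                   (\<Sum>j<n. W t i j *\<^sub>R (x t j \<omega> - eta *\<^sub>R g j (z t j \<omega>) (xi t j \<omega>)))"
    and z_def: "\<forall>t. \<forall>i<n. \<forall>\<omega>. z t i \<omega> = inverse (w t i) *\<^sub>R x t i \<omega>"
begin

abbreviation xbar :: "nat \<Rightarrow> 'w \<Rightarrow> 'a" where
  "xbar t \<omega> \<equiv> avg n (\<lambda>j. x t j \<omega>)"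

abbreviation noise_at :: "nat \<Rightarrow> nat \<Rightarrow> 'w \<Rightarrow> 'a" where
  "noise_at s j \<omega> \<equiv> g j (z s j \<omega>) (xi s j \<omega>) - gradF j (z s j \<omega>)"

definition history :: "nat \<Rightarrow> 'w \<Rightarrow> nat \<times> nat \<Rightarrow> 'c" where
  "history t \<omega> = restrict (\<lambda>p. xi (fst p) (snd p) \<omega>) ({..<t} \<times> {..<n})"

lemma z_eq: "i < n \<Longrightarrow> z t i = (\<lambda>\<omega>. inverse (w t i) *\<^sub>R x t i \<omega>)"
  using z_def by auto

lemma x_eq_sgp_iterate:
  assumes "i < n"
  shows "x t i \<omega> = sgp_iterate n W w eta g x0 t i (history t \<omega>)"
proof -
  have "x t i \<omega> = sgp_iterate n W w eta g x0 t i (\<lambda>p. xi (fst p) (snd p) \<omega>)"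
    using assms
  proof (induction t arbitrary: i)
    case (Suc t)
    then show ?case
      using x_step z_def by (auto intro!: sum.cong)
  qed (simp add: x_init)
  also have "\<dots> = sgp_iterate n W w eta g x0 t i (history t \<omega>)"
    by (rule sgp_iterate_cong_past) (simp add: history_def)
  finally show ?thesis .
qed

lemma history_measurable: "history t \<in> measurable M (PiM ({..<t} \<times> {..<n}) (\<lambda>p. D (snd p)))"
  unfolding history_def by (rule measurable_restrict) (auto simp: xi_meas)

lemma x_measurable:
  assumes "i < n"
  shows "x t i \<in> borel_measurable M"
proof -
  have "(\<lambda>\<omega>. sgp_iterate n W w eta g x0 t i (history t \<omega>)) \<in> borel_measurable M"
    by (rule measurable_compose[OF history_measurable sgp_iterate_measurable[OF g_meas order_refl]])
  moreover have "x t i = (\<lambda>\<omega>. sgp_iterate n W w eta g x0 t i (history t \<omega>))"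
    using assms by (simp add: fun_eq_iff x_eq_sgp_iterate)
  ultimately show ?thesis
    by simp
qed

lemma z_measurable: "i < n \<Longrightarrow> z t i \<in> borel_measurable M"
  unfolding z_eq by (intro borel_measurable_scaleR borel_measurable_const x_measurable)

lemma gradF_measurable: "i < n \<Longrightarrow> gradF i \<in> borel_measurable borel"
  using gradF_lipschitz by (intro borel_measurable_continuous_onI lipschitz_on_continuous_on)

lemma noise_measurable:
  assumes j: "j < n"
  shows "noise_at s j \<in> borel_measurable M"
proof -
  have "xi s j \<in> measurable M (D j)"
    using xi_meas j by simp
  then have pair: "(\<lambda>\<omega>. (z s j \<omega>, xi s j \<omega>)) \<in> measurable M (borel \<Otimes>\<^sub>M D j)"
    using z_measurable[OF j] by measurable
  have "(\<lambda>\<omega>. g j (z s j \<omega>) (xi s j \<omega>)) \<in> borel_measurable M"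
    using measurable_compose[OF pair, of "\<lambda>p. g j (fst p) (snd p)"] g_meas j by simp
  then show ?thesis
    using z_measurable[OF j] gradF_measurable[OF j] by measurable
qed

lemma noise_nn_integral_le:
  assumes j: "j < n"
  shows "(\<integral>\<^sup>+ \<omega>. ennreal ((norm (noise_at s j \<omega>))\<^sup>2) \<partial>M) \<le> ennreal (sigma\<^sup>2)"
proof -
  define \<Phi> where "\<Phi> c = inverse (w s j) *\<^sub>R sgp_iterate n W w eta g x0 s j c" for c
  define h where "h p = ennreal ((norm (g j (fst p) (snd p) - gradF j (fst p)))\<^sup>2)" for p
  have \<Phi>_meas: "\<Phi> \<in> borel_measurable (PiM ({..<s} \<times> {..<n}) (\<lambda>p. D (snd p)))"
    unfolding \<Phi>_def using sgp_iterate_measurable[OF g_meas order_refl] by measurable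
  have h_meas: "h \<in> borel_measurable (borel \<Otimes>\<^sub>M D j)"
  proof -
    have "(\<lambda>p. g j (fst p) (snd p)) \<in> borel_measurable (borel \<Otimes>\<^sub>M D j)"
      using g_meas j by simp
    moreover have "(\<lambda>p. gradF j (fst p)) \<in> borel_measurable (borel \<Otimes>\<^sub>M D j)"
      using measurable_compose[OF measurable_fst gradF_measurable[OF j]] .
    ultimately show ?thesis
      unfolding h_def by measurable
  qed
  have "(\<integral>\<^sup>+ \<omega>. h (\<Phi> (history s \<omega>), xi s j \<omega>) \<partial>M) \<le> ennreal (sigma\<^sup>2)"
    using nn_integral_indep_fresh_le[OF xi_indep, where K="{..<s} \<times> {..<n}" and k="(s, j)"
        and \<Phi>=\<Phi> and Ma=borel and h=h and b="ennreal (sigma\<^sup>2)"] \<Phi>_meas h_meas xi_distr noise j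
    by (auto simp: h_def history_def)
  moreover have "\<Phi> (history s \<omega>) = z s j \<omega>" for \<omega>
    using j by (simp add: \<Phi>_def z_def x_eq_sgp_iterate)
  ultimately show ?thesis
    by (simp add: h_def)
qed

lemma
  assumes "j < n"
  shows square_integrable_noise: "square_integrable M (noise_at s j)"
    and expected_noise_le: "(\<integral>\<omega>. (norm (noise_at s j \<omega>))\<^sup>2 \<partial>M) \<le> sigma\<^sup>2"
  using square_integrable_nn_integral_le[OF noise_measurable noise_nn_integral_le] assms by auto

lemma square_integrable_gradF:
  "i < n \<Longrightarrow> square_integrable M f \<Longrightarrow> square_integrable M (\<lambda>\<omega>. gradF i (f \<omega>))"
  using square_integrable_lipschitz_comp gradF_lipschitz finite_measure_axioms by blast

lemma square_integrable_x: "i < n \<Longrightarrow> square_integrable M (x t i)"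
proof (induction t arbitrary: i)
  case 0
  then have "x 0 i = (\<lambda>_. x0 i)"
    using x_init by auto
  then show ?case
    by (simp add: square_integrable_const finite_measure_axioms)
next
  case (Suc t)
  have z: "square_integrable M (z t j)" if "j < n" for j
    unfolding z_eq[OF that] by (intro square_integrable_scaleR Suc.IH that)
  have "x (Suc t) i = (\<lambda>\<omega>. \<Sum>j<n. W t i j *\<^sub>R (x t j \<omega> - eta *\<^sub>R (noise_at t j \<omega> + gradF j (z t j \<omega>))))"
    using x_step Suc.prems by auto
  then show ?case
    by (simp only:, intro square_integrable_sum finite_measure_axioms square_integrable_scaleR
        square_integrable_diff square_integrable_add Suc.IH square_integrable_noise
        square_integrable_gradF z) auto
qed

lemma square_integrable_z: "i < n \<Longrightarrow> square_integrable M (z t i)"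
  unfolding z_eq by (intro square_integrable_scaleR square_integrable_x)

lemma square_integrable_xbar: "square_integrable M (xbar t)"
  unfolding avg_def
  by (intro square_integrable_scaleR square_integrable_sum finite_measure_axioms square_integrable_x) auto

lemma square_integrable_consensus_error: "i < n \<Longrightarrow> square_integrable M (\<lambda>\<omega>. xbar t \<omega> - z t i \<omega>)"
  by (intro square_integrable_diff square_integrable_xbar square_integrable_z)

lemma square_integrable_avg_gradF_xbar:
  "square_integrable M (\<lambda>\<omega>. avg n (\<lambda>i. gradF i (xbar t \<omega>)))"
  unfolding avg_def[of n "\<lambda>i. gradF i _"]
  by (intro square_integrable_scaleR square_integrable_sum finite_measure_axioms square_integrable_gradF
      square_integrable_xbar) auto

definition max_grad_bound :: "real \<Rightarrow> nat \<Rightarrow> 'w \<Rightarrow> real" where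
  "max_grad_bound zeta s \<omega> = 2 * (\<Sum>j<n. (norm (noise_at s j \<omega>))\<^sup>2)
      + 6 * L\<^sup>2 * (\<Sum>j<n. (norm (xbar s \<omega> - z s j \<omega>))\<^sup>2) + 6 * real n * zeta\<^sup>2
      + 6 * (norm (avg n (\<lambda>i. gradF i (xbar s \<omega>))))\<^sup>2"

lemma integrable_consensus_error_power2:
  "i < n \<Longrightarrow> integrable M (\<lambda>\<omega>. (norm (xbar t \<omega> - z t i \<omega>))\<^sup>2)"
  using square_integrable_consensus_error by (simp add: square_integrable_def)

lemma integrable_sum_consensus_error_power2:
  "integrable M (\<lambda>\<omega>. \<Sum>i<n. (norm (xbar t \<omega> - z t i \<omega>))\<^sup>2)"
  by (intro Bochner_Integration.integrable_sum integrable_consensus_error_power2) simp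

lemma integrable_sum_noise_power2: "integrable M (\<lambda>\<omega>. \<Sum>j<n. (norm (noise_at s j \<omega>))\<^sup>2)"
  using square_integrable_noise
  by (intro Bochner_Integration.integrable_sum) (simp_all add: square_integrable_def)

lemma integrable_avg_gradF_xbar_power2:
  "integrable M (\<lambda>\<omega>. (norm (avg n (\<lambda>i. gradF i (xbar t \<omega>))))\<^sup>2)"
  using square_integrable_avg_gradF_xbar by (simp add: square_integrable_def)

lemma integrable_max_grad_bound: "integrable M (max_grad_bound zeta s)"
  unfolding max_grad_bound_def
  by (intro Bochner_Integration.integrable_add integrable_mult_right integrable_const
      integrable_sum_noise_power2 integrable_sum_consensus_error_power2 integrable_avg_gradF_xbar_power2)

lemma expected_max_grad_bound_le:
  "(\<integral>\<omega>. max_grad_bound zeta s \<omega> \<partial>M)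
    \<le> 2 * (real n * sigma\<^sup>2) + 6 * L\<^sup>2 * (\<Sum>j<n. \<integral>\<omega>. (norm (xbar s \<omega> - z s j \<omega>))\<^sup>2 \<partial>M)
      + 6 * real n * zeta\<^sup>2 + 6 * (\<integral>\<omega>. (norm (avg n (\<lambda>i. gradF i (xbar s \<omega>))))\<^sup>2 \<partial>M)"
proof -
  have "(\<integral>\<omega>. max_grad_bound zeta s \<omega> \<partial>M) = 2 * (\<Sum>j<n. \<integral>\<omega>. (norm (noise_at s j \<omega>))\<^sup>2 \<partial>M)
      + 6 * L\<^sup>2 * (\<Sum>j<n. \<integral>\<omega>. (norm (xbar s \<omega> - z s j \<omega>))\<^sup>2 \<partial>M) + 6 * real n * zeta\<^sup>2
      + 6 * (\<integral>\<omega>. (norm (avg n (\<lambda>i. gradF i (xbar s \<omega>))))\<^sup>2 \<partial>M)"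
    using square_integrable_noise
    by (simp add: max_grad_bound_def Bochner_Integration.integral_sum square_integrable_def prob_space
        integrable_consensus_error_power2 integrable_sum_consensus_error_power2
        integrable_sum_noise_power2 integrable_avg_gradF_xbar_power2)
  moreover have "(\<Sum>j<n. \<integral>\<omega>. (norm (noise_at s j \<omega>))\<^sup>2 \<partial>M) \<le> real n * sigma\<^sup>2"
    using sum_mono[of "{..<n}" "\<lambda>j. \<integral>\<omega>. (norm (noise_at s j \<omega>))\<^sup>2 \<partial>M" "\<lambda>_. sigma\<^sup>2"]
      expected_noise_le by simp
  ultimately show ?thesis
    by linarith
qed

lemma sum_consensus_error_power2_le:
  assumes n: "0 < n" and q: "0 \<le> q" "q < 1"
    and heterog: "\<forall>y. avg n (\<lambda>i. (norm (gradF i y - avg n (\<lambda>j. gradF j y)))\<^sup>2) \<le> zeta\<^sup>2"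
    and consensus: "\<forall>t. \<forall>i<n. norm (xbar t \<omega> - z t i \<omega>)
          \<le> C * q ^ t * X0 + eta * C * (\<Sum>s\<le>t. q ^ (t - s) *
               (MAX j\<in>{..<n}. norm (g j (z s j \<omega>) (xi s j \<omega>))))"
  shows "(\<Sum>t<T. \<Sum>i<n. (norm (xbar t \<omega> - z t i \<omega>))\<^sup>2)
    \<le> real n * (3 * C\<^sup>2 * X0\<^sup>2 / (1 - q)\<^sup>2)
      + real n * (3 / 2 * eta\<^sup>2 * C\<^sup>2 / (1 - q)\<^sup>2) * (\<Sum>s<T. max_grad_bound zeta s \<omega>)"
proof -
  define c k where "c = 3 * C\<^sup>2 * X0\<^sup>2 / (1 - q)\<^sup>2" and "k = 3 / 2 * eta\<^sup>2 * C\<^sup>2 / (1 - q)\<^sup>2"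
  define G where "G s = (MAX j\<in>{..<n}. norm (g j (z s j \<omega>) (xi s j \<omega>)))" for s
  have "(\<Sum>t<T. (norm (xbar t \<omega> - z t i \<omega>))\<^sup>2) \<le> c + k * (\<Sum>s<T. max_grad_bound zeta s \<omega>)"
    if i: "i < n" for i
  proof -
    have "(\<Sum>t<T. (norm (xbar t \<omega> - z t i \<omega>))\<^sup>2) \<le> c + k * (\<Sum>s<T. (G s)\<^sup>2)"
      unfolding c_def k_def
      by (rule sum_power2_geometric_bound_le[OF q]) (use consensus i in \<open>auto simp: G_def\<close>)
    also have "(\<Sum>s<T. (G s)\<^sup>2) \<le> (\<Sum>s<T. max_grad_bound zeta s \<omega>)"
      unfolding G_def max_grad_bound_def
      by (intro sum_mono Max_norm_power2_le[OF n gradF_lipschitz]) (use heterog in auto)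
    moreover have "0 \<le> k"
      by (simp add: k_def)
    ultimately show ?thesis
      by (smt (verit) mult_left_mono)
  qed
  then have "(\<Sum>i<n. \<Sum>t<T. (norm (xbar t \<omega> - z t i \<omega>))\<^sup>2)
      \<le> (\<Sum>i<n. c + k * (\<Sum>s<T. max_grad_bound zeta s \<omega>))"
    by (intro sum_mono) auto
  then show ?thesis
    by (subst sum.swap) (simp add: c_def k_def algebra_simps)
qed

lemma sum_expected_consensus_error_le:
  assumes n: "0 < n" and q: "0 \<le> q" "q < 1"
    and heterog: "\<forall>y. avg n (\<lambda>i. (norm (gradF i y - avg n (\<lambda>j. gradF j y)))\<^sup>2) \<le> zeta\<^sup>2"
    and consensus: "\<forall>t. AE \<omega> in M. \<forall>i<n. norm (xbar t \<omega> - z t i \<omega>)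
          \<le> C * q ^ t * X0 + eta * C * (\<Sum>s\<le>t. q ^ (t - s) *
               (MAX j\<in>{..<n}. norm (g j (z s j \<omega>) (xi s j \<omega>))))"
  shows "(\<Sum>t<T. \<Sum>i<n. \<integral>\<omega>. (norm (xbar t \<omega> - z t i \<omega>))\<^sup>2 \<partial>M)
    \<le> real n * (3 * C\<^sup>2 * X0\<^sup>2 / (1 - q)\<^sup>2) + real n * (3 / 2 * eta\<^sup>2 * C\<^sup>2 / (1 - q)\<^sup>2)
      * (2 * real n * sigma\<^sup>2 * real T
         + 6 * L\<^sup>2 * (\<Sum>t<T. \<Sum>i<n. \<integral>\<omega>. (norm (xbar t \<omega> - z t i \<omega>))\<^sup>2 \<partial>M)
         + 6 * real n * zeta\<^sup>2 * real T
         + 6 * (\<Sum>t<T. \<integral>\<omega>. (norm (avg n (\<lambda>i. gradF i (xbar t \<omega>))))\<^sup>2 \<partial>M))"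
proof -
  define c k where "c = 3 * C\<^sup>2 * X0\<^sup>2 / (1 - q)\<^sup>2" and "k = 3 / 2 * eta\<^sup>2 * C\<^sup>2 / (1 - q)\<^sup>2"
  define err where "err t i = (\<integral>\<omega>. (norm (xbar t \<omega> - z t i \<omega>))\<^sup>2 \<partial>M)" for t i
  define grad where "grad t = (\<integral>\<omega>. (norm (avg n (\<lambda>i. gradF i (xbar t \<omega>))))\<^sup>2 \<partial>M)" for t
  have "(\<Sum>t<T. \<Sum>i<n. err t i) = (\<integral>\<omega>. (\<Sum>t<T. \<Sum>i<n. (norm (xbar t \<omega> - z t i \<omega>))\<^sup>2) \<partial>M)"
    by (simp add: err_def Bochner_Integration.integral_sum integrable_consensus_error_power2
        integrable_sum_consensus_error_power2)
  also have "\<dots> \<le> (\<integral>\<omega>. real n * c + real n * k * (\<Sum>s<T. max_grad_bound zeta s \<omega>) \<partial>M)"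
  proof (rule integral_mono_AE)
    show "AE \<omega> in M. (\<Sum>t<T. \<Sum>i<n. (norm (xbar t \<omega> - z t i \<omega>))\<^sup>2)
        \<le> real n * c + real n * k * (\<Sum>s<T. max_grad_bound zeta s \<omega>)"
      using consensus[unfolded AE_all_countable[symmetric]]
      by eventually_elim (unfold c_def k_def, rule sum_consensus_error_power2_le[OF n q heterog])
  qed (intro Bochner_Integration.integrable_sum Bochner_Integration.integrable_add integrable_mult_right
      integrable_const integrable_sum_consensus_error_power2 integrable_max_grad_bound)+
  also have "\<dots> = real n * c + real n * k * (\<Sum>s<T. \<integral>\<omega>. max_grad_bound zeta s \<omega> \<partial>M)"
    by (simp add: Bochner_Integration.integral_sum Bochner_Integration.integrable_sum
        integrable_max_grad_bound prob_space)
  also have "\<dots> \<le> real n * c + real n * k * (\<Sum>s<T. 2 * (real n * sigma\<^sup>2)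
      + 6 * L\<^sup>2 * (\<Sum>j<n. err s j) + 6 * real n * zeta\<^sup>2 + 6 * grad s)"
    unfolding err_def grad_def
    by (intro add_left_mono mult_left_mono sum_mono expected_max_grad_bound_le) (simp_all add: k_def)
  also have "\<dots> = real n * c + real n * k * (2 * real n * sigma\<^sup>2 * real T
      + 6 * L\<^sup>2 * (\<Sum>t<T. \<Sum>i<n. err t i) + 6 * real n * zeta\<^sup>2 * real T + 6 * (\<Sum>t<T. grad t))"
    by (simp add: sum.distrib sum_distrib_left)
  finally show ?thesis
    by (simp add: c_def k_def err_def grad_def)
qed

end

lemma mixing_weight_Inf_le_one:
  fixes W :: "nat \<Rightarrow> nat \<Rightarrow> nat \<Rightarrow> real"
  assumes n: "0 < n" and nonneg: "\<forall>t. \<forall>i<n. \<forall>j<n. 0 \<le> W t i j"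
    and col_stochastic: "\<forall>t. \<forall>j<n. (\<Sum>i<n. W t i j) = 1"
  shows "Inf {W t i j | t i j. i < n \<and> j < n \<and> 0 < W t i j} \<le> 1"
proof -
  have sum_one: "(\<Sum>i<n. W 0 i 0) = 1"
    using col_stochastic n by auto
  then obtain i where i: "i < n" "0 < W 0 i 0"
    using nonneg n by (metis (no_types, lifting) lessThan_iff order_less_le sum.neutral zero_neq_one)
  have "Inf {W t i j | t i j. i < n \<and> j < n \<and> 0 < W t i j} \<le> W 0 i 0"
  proof (rule cInf_lower)
    show "W 0 i 0 \<in> {W t i j | t i j. i < n \<and> j < n \<and> 0 < W t i j}"
      using i n by blast
    show "bdd_below {W t i j | t i j. i < n \<and> j < n \<and> 0 < W t i j}"
      by (rule bdd_belowI[of _ 0]) auto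
  qed
  also have "W 0 i 0 \<le> (\<Sum>i<n. W 0 i 0)"
    by (rule member_le_sum) (use i nonneg n in auto)
  finally show ?thesis
    using sum_one by simp
qed

lemma powr_one_minus_lt_one:
  fixes a :: real
  assumes "0 < a" "a \<le> 1" "0 < m"
  shows "(1 - a) powr (1 / m) < 1"
  using powr_less_mono2[of "1 / m" "1 - a" 1] assms by simp

lemma gradient_sum_le_of_descent_and_consensus:
  fixes S S' E \<Delta> L eta q P C X0 sigma zeta :: real and n T :: nat
  assumes n: "0 < n" and eta: "0 < eta" "L * eta \<le> 1" and q: "q < 1"
    and P: "P = 1 - 9 * eta\<^sup>2 * C\<^sup>2 * L\<^sup>2 * real n / (1 - q)\<^sup>2" "0 < P"
    and S'_nonneg: "0 \<le> S'"
    and descent: "eta / 2 * S + (eta - L * eta\<^sup>2) / 2 * S'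
      \<le> \<Delta> + L * eta\<^sup>2 * sigma\<^sup>2 / (2 * real n) * real T + eta * L\<^sup>2 / 2 * E"
    and consensus: "real n * E \<le> real n * (3 * C\<^sup>2 * X0\<^sup>2 / (1 - q)\<^sup>2) + real n * (3 / 2 * eta\<^sup>2 * C\<^sup>2 / (1 - q)\<^sup>2)
      * (2 * real n * sigma\<^sup>2 * real T + 6 * L\<^sup>2 * (real n * E) + 6 * real n * zeta\<^sup>2 * real T + 6 * S)"
  shows "(1 - 9 * eta\<^sup>2 * L\<^sup>2 * C\<^sup>2 / (P * (1 - q)\<^sup>2)) * S
    \<le> 2 * \<Delta> / eta + L * eta * sigma\<^sup>2 * real T / real n
      + 3 * L\<^sup>2 * C\<^sup>2 * X0\<^sup>2 / (P * (1 - q)\<^sup>2)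
      + 3 * eta\<^sup>2 * L\<^sup>2 * C\<^sup>2 * real n * sigma\<^sup>2 * real T / (P * (1 - q)\<^sup>2)
      + 9 * eta\<^sup>2 * L\<^sup>2 * C\<^sup>2 * real n * zeta\<^sup>2 * real T / (P * (1 - q)\<^sup>2)"
proof -
  define c u where "c = 3 * C\<^sup>2 * X0\<^sup>2 / (1 - q)\<^sup>2" and "u = eta\<^sup>2 * C\<^sup>2 / (1 - q)\<^sup>2"
  have "0 \<le> (eta - L * eta\<^sup>2) / 2 * S'"
    using eta S'_nonneg by (simp add: power2_eq_square mult_right_le_one_le)
  then have "eta / 2 * S \<le> \<Delta> + L * eta\<^sup>2 * sigma\<^sup>2 / (2 * real n) * real T + eta * L\<^sup>2 / 2 * E"
    using descent by linarith
  then have S_le: "S \<le> 2 * \<Delta> / eta + L * eta * sigma\<^sup>2 * real T / real n + L\<^sup>2 * E"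
    using eta n by (simp add: field_simps power2_eq_square)
  have "real n * E \<le> real n * (c + 3 / 2 * u * (2 * real n * sigma\<^sup>2 * real T + 6 * L\<^sup>2 * (real n * E)
      + 6 * real n * zeta\<^sup>2 * real T + 6 * S))"
    using consensus by (simp add: c_def u_def algebra_simps)
  then have E_le: "E \<le> c + 3 / 2 * u * (2 * real n * sigma\<^sup>2 * real T + 6 * L\<^sup>2 * (real n * E)
      + 6 * real n * zeta\<^sup>2 * real T + 6 * S)"
    using n by simp
  have P_u: "P = 1 - 9 * u * L\<^sup>2 * real n"
    using P by (simp add: u_def)
  have "P * E \<le> c + 3 * u * real n * sigma\<^sup>2 * real T + 9 * u * real n * zeta\<^sup>2 * real T + 9 * u * S"
    using E_le unfolding P_u by (simp add: algebra_simps)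
  then have "L\<^sup>2 * E \<le> L\<^sup>2 * ((c + 3 * u * real n * sigma\<^sup>2 * real T + 9 * u * real n * zeta\<^sup>2 * real T
      + 9 * u * S) / P)"
    using P by (intro mult_left_mono) (simp_all add: pos_le_divide_eq mult.commute)
  also have "\<dots> = 3 * L\<^sup>2 * C\<^sup>2 * X0\<^sup>2 / (P * (1 - q)\<^sup>2)
      + 3 * eta\<^sup>2 * L\<^sup>2 * C\<^sup>2 * real n * sigma\<^sup>2 * real T / (P * (1 - q)\<^sup>2)
      + 9 * eta\<^sup>2 * L\<^sup>2 * C\<^sup>2 * real n * zeta\<^sup>2 * real T / (P * (1 - q)\<^sup>2)
      + 9 * eta\<^sup>2 * L\<^sup>2 * C\<^sup>2 / (P * (1 - q)\<^sup>2) * S"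
    using P q by (simp add: c_def u_def field_simps)
  finally show ?thesis
    using S_le by (simp add: algebra_simps)
qed

theorem lemmaA7:
  fixes n B Delta T :: nat
    and Eg :: "(nat \<times> nat) set"
    and W :: "nat \<Rightarrow> nat \<Rightarrow> nat \<Rightarrow> real"
    and L sigma zeta eta delta C q P X0 fstar :: real
    and F :: "nat \<Rightarrow> 'a::euclidean_space \<Rightarrow> real"
    and gradF :: "nat \<Rightarrow> 'a \<Rightarrow> 'a"
    and g :: "nat \<Rightarrow> 'a \<Rightarrow> 'c \<Rightarrow> 'a"
    and D :: "nat \<Rightarrow> 'c measure"
    and M :: "'w measure"
    and xi :: "nat \<Rightarrow> nat \<Rightarrow> 'w \<Rightarrow> 'c"
    and x :: "nat \<Rightarrow> nat \<Rightarrow> 'w \<Rightarrow> 'a"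
    and z :: "nat \<Rightarrow> nat \<Rightarrow> 'w \<Rightarrow> 'a"
    and w :: "nat \<Rightarrow> nat \<Rightarrow> real"
    and x0 :: "nat \<Rightarrow> 'a"
  assumes n2: "n \<ge> 2"
    (* base topology: bidirected, with self-loops, on nodes 0..n-1 *)
    and Eg_nodes: "Eg \<subseteq> {..<n} \<times> {..<n}"
    and Eg_loops: "\<forall>i<n. (i, i) \<in> Eg"
    and Eg_sym: "\<forall>i j. (i, j) \<in> Eg \<longrightarrow> (j, i) \<in> Eg"
    (* mixing matrices *)
    and W_nonneg: "\<forall>t. \<forall>i<n. \<forall>j<n. 0 \<le> W t i j"
    and W_colstoch: "\<forall>t. \<forall>j<n. (\<Sum>i<n. W t i j) = 1"
    and W_support: "\<forall>t. \<forall>i<n. \<forall>j<n. W t i j \<noteq> 0 \<longrightarrow> (j, i) \<in> Eg"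
    (* Assumption (4) *)
    and B_pos: "0 < B" and Delta_pos: "0 < Delta"
    and connectivity: "\<forall>l. strongly_connected_diam_le n
                          (\<Union>t\<in>{l * B..<(Suc l) * B}. active_edges Eg W t) Delta"
    (* constants *)
    and delta_def: "delta = Inf {W t i j | t i j. i < n \<and> j < n \<and> 0 < W t i j}"
    and delta_pos: "0 < delta"
    and C_def: "C = 4 / delta ^ (Delta * B)"
    and q_def: "q = (1 - delta ^ (Delta * B)) powr (1 / real (Delta * B))"
    (* Assumption (1): L-smoothness *)
    and F_grad: "\<forall>i<n. \<forall>y. (F i has_derivative (\<lambda>h. gradF i y \<bullet> h)) (at y)"
    and F_smooth: "\<forall>i<n. \<forall>y y'. norm (gradF i y - gradF i y') \<le> L * norm (y - y')"
    (* optimal value of f *)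
    and f_bdd: "bdd_below (range (\<lambda>y. avg n (\<lambda>i. F i y)))"
    and fstar_def: "fstar = (INF y. avg n (\<lambda>i. F i y))"
    (* stochastic gradients and Assumption (2) *)
    and D_prob: "\<forall>i<n. prob_space (D i)"
    and g_meas: "\<forall>i<n. (\<lambda>p. g i (fst p) (snd p)) \<in> borel_measurable (borel \<Otimes>\<^sub>M D i)"
    and noise: "\<forall>i<n. \<forall>y. (\<integral>\<^sup>+ s. ennreal ((norm (g i y s - gradF i y))\<^sup>2) \<partial>D i)
                         \<le> ennreal (sigma\<^sup>2)"
    (* Assumption (3) *)
    and heterog: "\<forall>y. avg n (\<lambda>i. (norm (gradF i y - avg n (\<lambda>j. gradF j y)))\<^sup>2) \<le> zeta\<^sup>2"
    (* fresh independent minibatches *)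
    and M_prob: "prob_space M"
    and xi_meas: "\<forall>t. \<forall>i<n. xi t i \<in> measurable M (D i)"
    and xi_distr: "\<forall>t. \<forall>i<n. distr M (D i) (xi t i) = D i"
    and xi_indep: "prob_space.indep_vars M (\<lambda>p. D (snd p)) (\<lambda>p. xi (fst p) (snd p))
                     (UNIV \<times> {..<n})"
    (* SGP iteration *)
    and x_init: "\<forall>i<n. \<forall>\<omega>. x 0 i \<omega> = x0 i"
    and x_step: "\<forall>t. \<forall>i<n. \<forall>\<omega>. x (Suc t) i \<omega> =
                   (\<Sum>j<n. W t i j *\<^sub>R (x t j \<omega> - eta *\<^sub>R g j (z t j \<omega>) (xi t j \<omega>)))"
    and w_init: "\<forall>i<n. w 0 i = 1"
    and w_step: "\<forall>t. \<forall>i<n. w (Suc t) i = (\<Sum>j<n. W t i j * w t j)"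
    and z_def: "\<forall>t. \<forall>i<n. \<forall>\<omega>. z t i \<omega> = inverse (w t i) *\<^sub>R x t i \<omega>"
    (* average consensus error bound *)
    and X0_def: "X0 = (MAX m\<in>{..<n}. norm (x0 m))"
    and consensus: "\<forall>t. AE \<omega> in M. \<forall>i<n.
          norm (avg n (\<lambda>j. x t j \<omega>) - z t i \<omega>)
            \<le> C * q ^ t * X0 + eta * C * (\<Sum>s\<le>t. q ^ (t - s) *
                 (MAX j\<in>{..<n}. norm (g j (z s j \<omega>) (xi s j \<omega>))))"
    and P_def: "P = 1 - 9 * eta\<^sup>2 * C\<^sup>2 * L\<^sup>2 * real n / (1 - q)\<^sup>2"
    and P_pos: "0 < P"
    (* step size and horizon *)
    and eta_pos: "0 < eta" and eta_le: "eta \<le> 1 / L"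
    and T_ge: "1 \<le> T"
    (* cumulative descent inequality *)
    and cumulative:
      "eta / 2 * (\<Sum>t<T. \<integral>\<omega>. (norm (avg n (\<lambda>i. gradF i (avg n (\<lambda>j. x t j \<omega>)))))\<^sup>2 \<partial>M)
       + (eta - L * eta\<^sup>2) / 2 * (\<Sum>t<T. \<integral>\<omega>. (norm (avg n (\<lambda>i. gradF i (z t i \<omega>))))\<^sup>2 \<partial>M)
       \<le> avg n (\<lambda>i. F i (avg n x0)) - fstar + L * eta\<^sup>2 * sigma\<^sup>2 / (2 * real n) * real T
         + eta * L\<^sup>2 / 2 * (\<Sum>t<T. avg n (\<lambda>i. \<integral>\<omega>. (norm (avg n (\<lambda>j. x t j \<omega>) - z t i \<omega>))\<^sup>2 \<partial>M))"
  shows "(1 - 9 * eta\<^sup>2 * L\<^sup>2 * C\<^sup>2 / (P * (1 - q)\<^sup>2))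
           * (\<Sum>t<T. \<integral>\<omega>. (norm (avg n (\<lambda>i. gradF i (avg n (\<lambda>j. x t j \<omega>)))))\<^sup>2 \<partial>M)
         \<le> 2 * (avg n (\<lambda>i. F i (avg n x0)) - fstar) / eta + L * eta * sigma\<^sup>2 * real T / real n
           + 3 * L\<^sup>2 * C\<^sup>2 * X0\<^sup>2 / (P * (1 - q)\<^sup>2)
           + 3 * eta\<^sup>2 * L\<^sup>2 * C\<^sup>2 * real n * sigma\<^sup>2 * real T / (P * (1 - q)\<^sup>2)
           + 9 * eta\<^sup>2 * L\<^sup>2 * C\<^sup>2 * real n * zeta\<^sup>2 * real T / (P * (1 - q)\<^sup>2)"
proof -
  (* The hypotheses on the graph, connectivity, F, w, C and X0 not used below only serve to justify
     the consensus bound and the cumulative descent inequality, which are assumed here. *)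
  have n: "0 < n"
    using n2 by simp
  have "0 < 1 / L"
    using eta_pos eta_le by linarith
  then have L: "0 < L"
    by simp
  have "L-lipschitz_on UNIV (gradF i)" if "i < n" for i
    using F_smooth that L by (intro lipschitz_onI) (auto simp: dist_norm)
  then interpret sgp_process M n W w eta L sigma gradF g D xi x z x0
    using M_prob g_meas noise xi_meas xi_distr xi_indep x_init x_step z_def
    by (simp add: sgp_process_def sgp_process_axioms_def)
  have "delta \<le> 1"
    using mixing_weight_Inf_le_one[OF n W_nonneg W_colstoch] by (simp add: delta_def)
  then have q: "0 \<le> q" "q < 1"
    using powr_one_minus_lt_one[of "delta ^ (Delta * B)" "real (Delta * B)"] delta_pos B_pos Delta_pos
    by (auto simp: q_def power_le_one)
  have "(\<Sum>t<T. \<Sum>i<n. \<integral>\<omega>. (norm (xbar t \<omega> - z t i \<omega>))\<^sup>2 \<partial>M)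
      = real n * (\<Sum>t<T. avg n (\<lambda>i. \<integral>\<omega>. (norm (xbar t \<omega> - z t i \<omega>))\<^sup>2 \<partial>M))"
    using n by (simp add: avg_def sum_distrib_left)
  with sum_expected_consensus_error_le[OF n q heterog consensus, of T]
  show ?thesis
    using eta_pos eta_le L
    by (intro gradient_sum_le_of_descent_and_consensus[OF n eta_pos _ q(2) P_def P_pos _ cumulative])
      (simp_all add: field_simps sum_nonneg)
qed

end
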